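(* Let $X,Y\subset\mathbb{Z}^d$ be nonempty finite sets. Then there exists $\tau\in\mathbb{Z}^d$ such that there is exactly one pair $(x,y)$ with $x\in X$, $y\in Y+\tau$ and $|x-y|=1$.
   Context: $|\cdot|$ is the Euclidean norm; $Y+\tau=\{y+\tau:y\in Y\}$. *)

theory Defs
  imports "HOL-Analysis.Analysis"
begin

definition int_lattice :: "(real ^ 'd) set" where
  "int_lattice = {x. \<forall>i. x $ i \<in> \<int>}"

end

theory Submission
  imports Defs
begin

text \<open>Choose \<open>(x\<^sub>0, y\<^sub>0) \<in> X \<times> Y\<close> with \<open>d = x\<^sub>0 - y\<^sub>0\<close> of maximal length, a coordinate \<open>i\<close>
  where \<open>\<bar>d\<^sub>i\<bar>\<close> is maximal and its sign \<open>s\<close>, and put \<open>\<tau> = d + s e\<^sub>i\<close>. Then \<open>(x\<^sub>0, y\<^sub>0 + \<tau>)\<close>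
  is at distance 1. If \<open>x - (y + \<tau>) = \<sigma> e\<^sub>j\<close> is another lattice unit vector, then
  \<open>x - y = d + s e\<^sub>i + \<sigma> e\<^sub>j\<close>, and \<open>d \<bullet> (s e\<^sub>i + \<sigma> e\<^sub>j) = \<bar>d\<^sub>i\<bar> + \<sigma> d\<^sub>j \<ge> 0\<close>, so \<open>x - y\<close> would be
  strictly longer than \<open>d\<close> unless \<open>x - y = d\<close>. In that case \<open>x - y\<^sub>0\<close> and \<open>x\<^sub>0 - y\<close> have
  length at most \<open>|d|\<close> and sum \<open>2d\<close>; by strict convexity of the norm they coincide,
  so \<open>x = x\<^sub>0\<close> and \<open>y = y\<^sub>0\<close>.\<close>

lemma finite_ex_max:
  fixes f :: "'a \<Rightarrow> 'b::linorder"
  assumes "finite S" "S \<noteq> {}"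
  shows "\<exists>x\<in>S. \<forall>y\<in>S. f y \<le> f x"
proof -
  have "Max (f ` S) \<in> f ` S"
    using assms by (intro Max_in) auto
  then obtain x where "x \<in> S" "f x = Max (f ` S)"
    by auto
  with assms show ?thesis
    by (metis Max_ge finite_imageI image_eqI)
qed

lemma eq_if_norm_le_add_eq_double:
  fixes a b c :: "'a::real_inner"
  assumes "norm a \<le> norm c" "norm b \<le> norm c" "a + b = 2 *\<^sub>R c"
  shows "a = b"
proof -
  have "(norm a)\<^sup>2 \<le> (norm c)\<^sup>2" "(norm b)\<^sup>2 \<le> (norm c)\<^sup>2"
    using assms(1,2) by (auto intro: power_mono)
  moreover have "(norm (a + b))\<^sup>2 + (norm (a - b))\<^sup>2 = 2 * (norm a)\<^sup>2 + 2 * (norm b)\<^sup>2"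
    by (simp add: power2_norm_eq_inner algebra_simps inner_commute)
  moreover have "(norm (a + b))\<^sup>2 = 4 * (norm c)\<^sup>2"
    using assms(3) by (simp add: power_mult_distrib)
  ultimately have "(norm (a - b))\<^sup>2 \<le> 0"
    by linarith
  then show ?thesis
    by simp
qed

lemma int_lattice_iff: "v \<in> int_lattice \<longleftrightarrow> (\<forall>k. v $ k \<in> \<int>)"
  by (simp add: int_lattice_def)

lemma int_lattice_add: "u \<in> int_lattice \<Longrightarrow> v \<in> int_lattice \<Longrightarrow> u + v \<in> int_lattice"
  by (simp add: int_lattice_iff)

lemma int_lattice_diff: "u \<in> int_lattice \<Longrightarrow> v \<in> int_lattice \<Longrightarrow> u - v \<in> int_lattice"
  by (simp add: int_lattice_iff)

lemma axis_in_int_lattice: "c \<in> \<int> \<Longrightarrow> axis j c \<in> int_lattice"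
  by (simp add: int_lattice_iff axis_def)

lemma norm_axis: "norm (axis j (c::real)) = \<bar>c\<bar>"
  by (simp add: norm_eq_sqrt_inner inner_axis_axis)

lemma int_lattice_norm_eq_1:
  fixes w :: "real ^ 'd"
  assumes "w \<in> int_lattice" "norm w = 1"
  obtains j \<sigma> where "\<bar>\<sigma>\<bar> = 1" "w = axis j \<sigma>"
proof -
  have sum_sq: "(\<Sum>k\<in>UNIV. w $ k * w $ k) = 1"
    using assms(2) by (simp add: norm_eq_1 inner_vec_def)
  have "w \<noteq> 0"
    using assms(2) by auto
  then obtain j where "w $ j \<noteq> 0"
    by (metis vec_eq_iff zero_index)
  then have wj_ge: "1 \<le> \<bar>w $ j\<bar>"
    using assms(1) by (simp add: int_lattice_iff Ints_nonzero_abs_ge1)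
  have "1 \<le> w $ j * w $ j"
    using mult_mono[OF wj_ge wj_ge] by simp
  moreover have "(\<Sum>k\<in>UNIV. w $ k * w $ k) = w $ j * w $ j + (\<Sum>k\<in>UNIV - {j}. w $ k * w $ k)"
    by (simp add: sum.remove)
  moreover have "0 \<le> (\<Sum>k\<in>UNIV - {j}. w $ k * w $ k)"
    by (simp add: sum_nonneg)
  ultimately have wj: "w $ j * w $ j = 1" and rest: "(\<Sum>k\<in>UNIV - {j}. w $ k * w $ k) = 0"
    using sum_sq by linarith+
  have "w $ k = 0" if "k \<noteq> j" for k
    using rest that sum_nonneg_eq_0_iff[of "UNIV - {j}" "\<lambda>k. w $ k * w $ k"] by auto
  then have "w = axis j (w $ j)"
    by (auto simp: vec_eq_iff axis_def)
  moreover have "\<bar>w $ j\<bar> = 1"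
    using wj by (auto simp: square_eq_1_iff)
  ultimately show thesis
    using that by blast
qed

lemma norm_lt_add_axis_axis:
  fixes d :: "real ^ 'd"
  assumes "\<And>k. \<bar>d $ k\<bar> \<le> \<bar>d $ i\<bar>" and "s * d $ i = \<bar>d $ i\<bar>" and "\<bar>\<sigma>\<bar> = 1"
    and "axis i s + axis j \<sigma> \<noteq> 0"
  shows "norm d < norm (d + (axis i s + axis j \<sigma>))"
proof -
  define v where "v = axis i s + axis j \<sigma>"
  have "\<sigma> * d $ j \<ge> - \<bar>d $ j\<bar>"
    using assms(3) by (cases "\<sigma> \<ge> 0") auto
  then have "0 \<le> d \<bullet> v"
    using assms(1)[of j] assms(2) by (simp add: v_def inner_add_right inner_axis mult.commute)
  moreover have "0 < v \<bullet> v"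
    using assms(4) by (simp add: v_def)
  moreover have "(norm (d + v))\<^sup>2 = (norm d)\<^sup>2 + 2 * (d \<bullet> v) + v \<bullet> v"
    by (simp add: power2_norm_eq_inner inner_add_left inner_add_right inner_commute)
  ultimately have "(norm d)\<^sup>2 < (norm (d + v))\<^sup>2"
    by linarith
  then show ?thesis
    by (simp add: v_def power2_less_imp_less)
qed

lemma eq_max_pair_if_axis_neighbour:
  fixes x0 y0 :: "real ^ 'd"
  assumes d: "d = x0 - y0"
    and max: "\<And>x y. x \<in> X \<Longrightarrow> y \<in> Y \<Longrightarrow> norm (x - y) \<le> norm d"
    and x0: "x0 \<in> X" and y0: "y0 \<in> Y"
    and dom: "\<And>k. \<bar>d $ k\<bar> \<le> \<bar>d $ i\<bar>" and sgn: "s * d $ i = \<bar>d $ i\<bar>"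
    and x: "x \<in> X" and y: "y \<in> Y"
    and unit: "x - (y + (d + axis i s)) = axis j \<sigma>" "\<bar>\<sigma>\<bar> = 1"
  shows "x = x0 \<and> y = y0"
proof -
  have diff: "x - y = d + (axis i s + axis j \<sigma>)"
    using unit(1) by (simp add: algebra_simps)
  have "axis i s + axis j \<sigma> = 0"
    using norm_lt_add_axis_axis[OF dom sgn unit(2)] max[OF x y] by (force simp: diff)
  then have "x - y = d"
    using diff by simp
  then have "(x - y0) + (x0 - y) = 2 *\<^sub>R d"
    by (simp add: d algebra_simps scaleR_2)
  then have "x - y0 = x0 - y"
    using max[OF x y0] max[OF x0 y] by (rule eq_if_norm_le_add_eq_double[rotated 2])
  moreover have "2 *\<^sub>R (x - x0) = (x - y0) - (x0 - y) + ((x - y) - d)"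
    by (simp add: d algebra_simps scaleR_2)
  ultimately have "x = x0"
    using \<open>x - y = d\<close> by simp
  with \<open>x - y = d\<close> show ?thesis
    by (simp add: d)
qed

lemma ex1_unit_pair_translate:
  fixes x0 y0 :: "real ^ 'd"
  assumes d: "d = x0 - y0"
    and lattice: "X \<subseteq> int_lattice" "Y \<subseteq> int_lattice"
    and max: "\<And>x y. x \<in> X \<Longrightarrow> y \<in> Y \<Longrightarrow> norm (x - y) \<le> norm d"
    and x0: "x0 \<in> X" and y0: "y0 \<in> Y"
    and dom: "\<And>k. \<bar>d $ k\<bar> \<le> \<bar>d $ i\<bar>" and sgn: "s * d $ i = \<bar>d $ i\<bar>" "\<bar>s\<bar> = 1"
  shows "\<exists>!p. p \<in> X \<times> ((\<lambda>y. y + (d + axis i s)) ` Y) \<and> norm (fst p - snd p) = 1"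
proof (rule ex1I[of _ "(x0, y0 + (d + axis i s))"])
  have "x0 - (y0 + (d + axis i s)) = - axis i s"
    by (simp add: d algebra_simps)
  then have "norm (x0 - (y0 + (d + axis i s))) = 1"
    using sgn(2) by (simp only: norm_minus_cancel norm_axis)
  then show "(x0, y0 + (d + axis i s)) \<in> X \<times> ((\<lambda>y. y + (d + axis i s)) ` Y)
      \<and> norm (fst (x0, y0 + (d + axis i s)) - snd (x0, y0 + (d + axis i s))) = 1"
    using x0 y0 by simp
next
  fix p
  assume "p \<in> X \<times> ((\<lambda>y. y + (d + axis i s)) ` Y) \<and> norm (fst p - snd p) = 1"
  then obtain x y where p: "p = (x, y + (d + axis i s))" and x: "x \<in> X" and y: "y \<in> Y"
    and unit: "norm (x - (y + (d + axis i s))) = 1"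
    by auto
  have "s \<in> \<int>"
    using sgn(2) by (cases "0 \<le> s") auto
  then have "x - (y + (d + axis i s)) \<in> int_lattice"
    using x y x0 y0 lattice
    by (auto simp: d intro!: int_lattice_diff int_lattice_add axis_in_int_lattice)
  then obtain j \<sigma> where "x - (y + (d + axis i s)) = axis j \<sigma>" "\<bar>\<sigma>\<bar> = 1"
    using unit by (rule int_lattice_norm_eq_1)
  then have "x = x0 \<and> y = y0"
    using eq_max_pair_if_axis_neighbour[OF d max x0 y0 dom sgn(1) x y] by simp
  then show "p = (x0, y0 + (d + axis i s))"
    by (simp add: p)
qed

theorem lemma3p4:
  fixes X Y :: "(real ^ 'd) set"
  assumes "finite X" "finite Y" "X \<noteq> {}" "Y \<noteq> {}"
    and "X \<subseteq> int_lattice" "Y \<subseteq> int_lattice"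
  shows "\<exists>\<tau>\<in>int_lattice. \<exists>!p. p \<in> X \<times> ((\<lambda>y. y + \<tau>) ` Y) \<and> norm (fst p - snd p) = 1"
proof -
  obtain x0 y0 where x0: "x0 \<in> X" and y0: "y0 \<in> Y"
    and max: "\<And>x y. x \<in> X \<Longrightarrow> y \<in> Y \<Longrightarrow> norm (x - y) \<le> norm (x0 - y0)"
    using finite_ex_max[of "X \<times> Y" "\<lambda>(x, y). norm (x - y)"] assms(1-4) by auto
  define d where "d = x0 - y0"
  obtain i where dom: "\<And>k. \<bar>d $ k\<bar> \<le> \<bar>d $ i\<bar>"
    using finite_ex_max[of UNIV "\<lambda>k. \<bar>d $ k\<bar>"] by auto
  define s :: real where "s = (if 0 \<le> d $ i then 1 else -1)"
  have sgn: "s * d $ i = \<bar>d $ i\<bar>" "\<bar>s\<bar> = 1" and "s \<in> \<int>"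
    by (auto simp: s_def)
  have "d + axis i s \<in> int_lattice"
    using x0 y0 assms(5,6) \<open>s \<in> \<int>\<close>
    by (auto simp: d_def intro!: int_lattice_add int_lattice_diff axis_in_int_lattice)
  moreover have "\<exists>!p. p \<in> X \<times> ((\<lambda>y. y + (d + axis i s)) ` Y) \<and> norm (fst p - snd p) = 1"
    using d_def assms(5,6) max[folded d_def] x0 y0 dom sgn by (rule ex1_unit_pair_translate)
  ultimately show ?thesis
    by blast
qed

end
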